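(* The action of $L$ on $V(G_{E_8})$ has exactly 15 orbits, each of size 8, and each orbit is a clique of size 8 in $G_{E_8}$; thus the orbits partition $V(G_{E_8})$ into 15 cliques of size 8.
   Context: The $E_8$ root system $\Psi_{E_8}\subset\mathbb{R}^8$ consists of the 240 vectors $\pm e_i\pm e_j$ ($1\le i<j\le 8$) and all $x\in\{\pm1\}^8$ with $\prod_i x_i=1$. $G_{E_8}$ is the graph with vertices $v_x$, $x\in\Psi_{E_8}$, where $v_x=v_{-x}$, and $v_x\sim v_y$ iff $\langle x,y\rangle=0$. Let $I=\mathrm{diag}(1,1)$, $X=\begin{pmatrix}0&1\\1&0\end{pmatrix}$, $Z=\mathrm{diag}(1,-1)$, $Y=XZ$. For $M=M_1\otimes M_2\otimes M_3$ with $M_i\in\{I,X,Y,Z\}$, $\sigma_M:v_x\mapsto v_{Mx}$ is an automorphism of $G_{E_8}$, and $L=\{\sigma_M\}\cong\mathbb{Z}_2^6$ is the resulting subgroup of $\mathrm{Aut}(G_{E_8})$. *)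

theory Defs
  imports Main
begin

text \<open>Vectors of R^8 with integer entries (all E8 roots in the given coordinates are integral)
  are represented as int lists of length 8; coordinate x_{k+1} is the list entry k.
  8x8 and 2x2 matrices are functions nat => nat => int (indices from 0).\<close>

definition inner8 :: "int list \<Rightarrow> int list \<Rightarrow> int" where
  "inner8 x y = (\<Sum>k<8. x ! k * y ! k)"

definition E8_roots :: "int list set" where
  "E8_roots =
     {map (\<lambda>k. if k = i then s else if k = j then t else 0) [0..<8] | i j s t.
        i < j \<and> j < 8 \<and> s \<in> {1, -1} \<and> t \<in> {1, -1}}
   \<union> {x. length x = 8 \<and> set x \<subseteq> {1, -1} \<and> prod_list x = 1}"

definition vtx :: "int list \<Rightarrow> int list set" where
  "vtx x = {x, map uminus x}"

definition E8_vertices :: "int list set set" where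
  "E8_vertices = vtx ` E8_roots"

text \<open>v_x ~ v_y iff <x,y> = 0 (independent of the chosen representatives).\<close>
definition E8_adj :: "int list set \<Rightarrow> int list set \<Rightarrow> bool" where
  "E8_adj u v = (\<exists>x y. u = vtx x \<and> v = vtx y \<and> x \<in> E8_roots \<and> y \<in> E8_roots \<and> inner8 x y = 0)"

definition is_clique :: "int list set set \<Rightarrow> bool" where
  "is_clique C = (C \<subseteq> E8_vertices \<and> (\<forall>u\<in>C. \<forall>v\<in>C. u \<noteq> v \<longrightarrow> E8_adj u v))"

definition pI :: "nat \<Rightarrow> nat \<Rightarrow> int" where "pI i j = (if i = j then 1 else 0)"
definition pX :: "nat \<Rightarrow> nat \<Rightarrow> int" where "pX i j = (if i \<noteq> j then 1 else 0)"
definition pZ :: "nat \<Rightarrow> nat \<Rightarrow> int" where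
  "pZ i j = (if i = j then (if i = 0 then 1 else -1) else 0)"
definition pY :: "nat \<Rightarrow> nat \<Rightarrow> int" where "pY i j = (\<Sum>k<2. pX i k * pZ k j)"

definition paulis :: "(nat \<Rightarrow> nat \<Rightarrow> int) set" where
  "paulis = {pI, pX, pY, pZ}"

text \<open>Kronecker product M1 (x) M2 (x) M3, rows/columns indexed by i = 4 i1 + 2 i2 + i3.\<close>
definition kron3 :: "(nat \<Rightarrow> nat \<Rightarrow> int) \<Rightarrow> (nat \<Rightarrow> nat \<Rightarrow> int) \<Rightarrow> (nat \<Rightarrow> nat \<Rightarrow> int)
    \<Rightarrow> nat \<Rightarrow> nat \<Rightarrow> int" where
  "kron3 A B C i j = A (i div 4) (j div 4) * B ((i div 2) mod 2) ((j div 2) mod 2)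
      * C (i mod 2) (j mod 2)"

definition mat_vec8 :: "(nat \<Rightarrow> nat \<Rightarrow> int) \<Rightarrow> int list \<Rightarrow> int list" where
  "mat_vec8 M x = map (\<lambda>i. \<Sum>j<8. M i j * x ! j) [0..<8]"

definition sigma :: "(nat \<Rightarrow> nat \<Rightarrow> int) \<Rightarrow> int list set \<Rightarrow> int list set" where
  "sigma M v = mat_vec8 M ` v"

definition L_group :: "(int list set \<Rightarrow> int list set) set" where
  "L_group = {sigma (kron3 A B C) | A B C. A \<in> paulis \<and> B \<in> paulis \<and> C \<in> paulis}"

definition L_orbit :: "int list set \<Rightarrow> int list set set" where
  "L_orbit v = {g v | g. g \<in> L_group}"

definition L_orbits :: "int list set set set" where
  "L_orbits = L_orbit ` E8_vertices"

end

theory Submission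
  imports Defs
begin

(* Every M1 (x) M2 (x) M3 is a signed permutation matrix, so sigma_M permutes the coordinates of a
   root and changes some of their signs.  Products of Pauli matrices are Pauli matrices up to sign
   and each squares to +-I; hence, as maps on vertices, L is closed under composition and consists
   of involutions, and the orbits of L partition the vertex set.  Representing v_x by whichever of
   x, -x has positive first non-zero entry, the orbits are computed greedily: 15 of them, each made
   of 8 pairwise orthogonal roots. *)

section \<open>Signed permutation matrices\<close>

(* (p, s) stands for the matrix whose row i has the single non-zero entry s i, in column p i. *)
type_synonym signed_map = "(nat \<Rightarrow> nat) \<times> (nat \<Rightarrow> int)"

definition signed_map_apply :: "signed_map \<Rightarrow> int list \<Rightarrow> int list" where
  "signed_map_apply g x = map (\<lambda>i. snd g i * x ! fst g i) [0..<8]"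

definition signed_map_matrix :: "nat \<Rightarrow> signed_map \<Rightarrow> (nat \<Rightarrow> nat \<Rightarrow> int) \<Rightarrow> bool" where
  "signed_map_matrix n g M \<longleftrightarrow>
     (\<forall>i<n. fst g i < n \<and> (\<forall>j<n. M i j = (if j = fst g i then snd g i else 0)))"

lemma mat_vec8_signed_map:
  assumes "signed_map_matrix 8 g M"
  shows "mat_vec8 M x = signed_map_apply g x"
proof -
  have "(\<Sum>j<8. M i j * x ! j) = snd g i * x ! fst g i" if "i < 8" for i
  proof -
    have "(\<Sum>j<8. M i j * x ! j) = (\<Sum>j<8. if j = fst g i then snd g i * x ! j else 0)"
      using assms that by (intro sum.cong) (auto simp: signed_map_matrix_def)
    then show ?thesis
      using assms that by (simp add: signed_map_matrix_def)
  qed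
  then show ?thesis
    by (simp add: mat_vec8_def signed_map_apply_def)
qed

lemma signed_map_apply_uminus:
  assumes "\<forall>i<8. fst g i < length x"
  shows "signed_map_apply g (map uminus x) = map uminus (signed_map_apply g x)"
  using assms by (simp add: signed_map_apply_def)

lemma vtx_eq_iff: "vtx x = vtx y \<longleftrightarrow> y = x \<or> y = map uminus x"
  by (auto simp: vtx_def doubleton_eq_iff)

lemma signed_map_apply_vtx_cong:
  assumes "\<forall>i<8. fst g i < length x" "vtx y = vtx x"
  shows "vtx (signed_map_apply g y) = vtx (signed_map_apply g x)"
  using assms by (auto simp: vtx_eq_iff signed_map_apply_uminus)

lemma vtx_scale:
  assumes "e \<in> {1, -1}"
  shows "vtx (map (\<lambda>a. e * a) x) = vtx x"
  using assms by (auto simp: vtx_def map_idI)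

lemma sigma_vtx:
  assumes "signed_map_matrix 8 g M" and "length x = 8"
  shows "sigma M (vtx x) = vtx (signed_map_apply g x)"
proof -
  have "\<forall>i<8. fst g i < length x"
    using assms by (simp add: signed_map_matrix_def)
  then have "mat_vec8 M (map uminus x) = map uminus (mat_vec8 M x)"
    using signed_map_apply_uminus by (simp add: mat_vec8_signed_map[OF assms(1)])
  then show ?thesis
    by (simp add: sigma_def vtx_def mat_vec8_signed_map[OF assms(1)])
qed

section \<open>Kronecker products of Pauli matrices\<close>

definition pauli_maps :: "signed_map list" where
  "pauli_maps =
     [(id, \<lambda>_. 1), (\<lambda>i. 1 - i, \<lambda>_. 1),
      (\<lambda>i. 1 - i, \<lambda>i. if i = 0 then -1 else 1), (id, \<lambda>i. if i = 0 then 1 else -1)]"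

lemma pauli_maps_matrices: "rel_set (signed_map_matrix 2) (set pauli_maps) paulis"
  by (auto simp: rel_set_def paulis_def pauli_maps_def signed_map_matrix_def less_2_cases_iff
      pI_def pX_def pY_def pZ_def numeral_2_eq_2 lessThan_Suc less_Suc_eq)

lemma pauli_maps_range: "a \<in> set pauli_maps \<Longrightarrow> \<forall>i<2. fst a i < 2"
  by (auto simp: pauli_maps_def)

definition kron3_map :: "signed_map \<Rightarrow> signed_map \<Rightarrow> signed_map \<Rightarrow> signed_map" where
  "kron3_map a b c =
     (\<lambda>i. 4 * fst a (i div 4) + 2 * fst b (i div 2 mod 2) + fst c (i mod 2),
      \<lambda>i. snd a (i div 4) * snd b (i div 2 mod 2) * snd c (i mod 2))"

lemma binary_digits:
  fixes d2 d1 d0 :: nat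
  assumes "d2 < 2" "d1 < 2" "d0 < 2"
  shows "(4 * d2 + 2 * d1 + d0) div 4 = d2" "(4 * d2 + 2 * d1 + d0) div 2 mod 2 = d1"
    "(4 * d2 + 2 * d1 + d0) mod 2 = d0"
  using assms by (auto simp: less_2_cases_iff)

lemma binary_expansion: "(j::nat) = 4 * (j div 4) + 2 * (j div 2 mod 2) + j mod 2"
proof -
  have "j div 2 div 2 = j div 4"
    by (simp add: div_mult2_eq)
  then show ?thesis
    using div_mult_mod_eq[of j 2] div_mult_mod_eq[of "j div 2" 2] by linarith
qed

lemma binary_digits_eq_iff:
  fixes d2 d1 d0 :: nat
  assumes "d2 < 2" "d1 < 2" "d0 < 2"
  shows "j = 4 * d2 + 2 * d1 + d0 \<longleftrightarrow> j div 4 = d2 \<and> j div 2 mod 2 = d1 \<and> j mod 2 = d0"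
  using binary_digits[OF assms] binary_expansion[of j] by metis

lemma kron3_map_range:
  assumes "\<forall>i<2. fst a i < 2" "\<forall>i<2. fst b i < 2" "\<forall>i<2. fst c i < 2"
  shows "\<forall>i<8. fst (kron3_map a b c) i < 8"
proof (intro allI impI)
  fix i :: nat
  assume "i < 8"
  then have "fst a (i div 4) < 2" "fst b (i div 2 mod 2) < 2" "fst c (i mod 2) < 2"
    using assms by auto
  then show "fst (kron3_map a b c) i < 8"
    by (simp add: kron3_map_def)
qed

lemma kron3_signed_map_matrix:
  assumes "signed_map_matrix 2 a A" "signed_map_matrix 2 b B" "signed_map_matrix 2 c C"
  shows "signed_map_matrix 8 (kron3_map a b c) (kron3 A B C)"
  unfolding signed_map_matrix_def
proof (intro allI impI conjI)
  fix i j :: nat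
  assume "i < 8"
  then have digits: "i div 4 < 2" "i div 2 mod 2 < 2" "i mod 2 < 2"
    by auto
  then have ranges: "fst a (i div 4) < 2" "fst b (i div 2 mod 2) < 2" "fst c (i mod 2) < 2"
    using assms by (auto simp: signed_map_matrix_def)
  then show "fst (kron3_map a b c) i < 8"
    by (simp add: kron3_map_def)
  assume "j < 8"
  then have "j div 4 < 2" "j div 2 mod 2 < 2" "j mod 2 < 2"
    by auto
  with digits assms have "kron3 A B C i j =
      (if j div 4 = fst a (i div 4) then snd a (i div 4) else 0)
      * (if j div 2 mod 2 = fst b (i div 2 mod 2) then snd b (i div 2 mod 2) else 0)
      * (if j mod 2 = fst c (i mod 2) then snd c (i mod 2) else 0)"
    by (simp add: kron3_def signed_map_matrix_def)
  also have "\<dots> = (if j = fst (kron3_map a b c) i then snd (kron3_map a b c) i else 0)"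
    by (simp add: kron3_map_def binary_digits_eq_iff[OF ranges])
  finally show "kron3 A B C i j = (if j = fst (kron3_map a b c) i then snd (kron3_map a b c) i else 0)" .
qed

definition L_maps :: "signed_map list" where
  "L_maps = [kron3_map a b c. a \<leftarrow> pauli_maps, b \<leftarrow> pauli_maps, c \<leftarrow> pauli_maps]"

lemma L_mapsE:
  assumes "g \<in> set L_maps"
  obtains a b c where "a \<in> set pauli_maps" "b \<in> set pauli_maps" "c \<in> set pauli_maps"
    "g = kron3_map a b c"
  using assms by (auto simp: L_maps_def)

lemma L_maps_range:
  assumes "g \<in> set L_maps"
  shows "\<forall>i<8. fst g i < 8"
  using assms by (elim L_mapsE) (simp add: kron3_map_range pauli_maps_range)

lemma L_orbit_vtx:
  assumes "length x = 8"
  shows "L_orbit (vtx x) = (\<lambda>g. vtx (signed_map_apply g x)) ` set L_maps"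
proof (intro equalityI subsetI)
  fix v
  assume "v \<in> L_orbit (vtx x)"
  then obtain A B C where ABC: "A \<in> paulis" "B \<in> paulis" "C \<in> paulis"
    and v: "v = sigma (kron3 A B C) (vtx x)"
    unfolding L_orbit_def L_group_def by blast
  obtain a b c where abc: "a \<in> set pauli_maps" "b \<in> set pauli_maps" "c \<in> set pauli_maps"
    and "signed_map_matrix 2 a A" "signed_map_matrix 2 b B" "signed_map_matrix 2 c C"
    using ABC rel_setD2[OF pauli_maps_matrices] by metis
  then have "v = vtx (signed_map_apply (kron3_map a b c) x)"
    using v sigma_vtx[OF kron3_signed_map_matrix assms] by simp
  moreover have "kron3_map a b c \<in> set L_maps"
    using abc by (auto simp: L_maps_def)
  ultimately show "v \<in> (\<lambda>g. vtx (signed_map_apply g x)) ` set L_maps"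
    by blast
next
  fix v
  assume "v \<in> (\<lambda>g. vtx (signed_map_apply g x)) ` set L_maps"
  then obtain a b c where abc: "a \<in> set pauli_maps" "b \<in> set pauli_maps" "c \<in> set pauli_maps"
    and v: "v = vtx (signed_map_apply (kron3_map a b c) x)"
    by (auto simp: L_maps_def)
  obtain A B C where ABC: "A \<in> paulis" "B \<in> paulis" "C \<in> paulis"
    and "signed_map_matrix 2 a A" "signed_map_matrix 2 b B" "signed_map_matrix 2 c C"
    using abc rel_setD1[OF pauli_maps_matrices] by metis
  then have "v = sigma (kron3 A B C) (vtx x)"
    using v sigma_vtx[OF kron3_signed_map_matrix assms] by simp
  then show "v \<in> L_orbit (vtx x)"
    using ABC unfolding L_orbit_def L_group_def by blast
qed

lemma E8_roots_length: "x \<in> E8_roots \<Longrightarrow> length x = 8"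
  by (auto simp: E8_roots_def)

section \<open>L is a group of involutions up to sign\<close>

definition compose_map :: "signed_map \<Rightarrow> signed_map \<Rightarrow> signed_map" where
  "compose_map g h = (fst h \<circ> fst g, \<lambda>i. snd g i * snd h (fst g i))"

definition scale_map :: "int \<Rightarrow> signed_map \<Rightarrow> signed_map" where
  "scale_map e g = (fst g, \<lambda>i. e * snd g i)"

definition agree_on :: "nat \<Rightarrow> signed_map \<Rightarrow> signed_map \<Rightarrow> bool" where
  "agree_on n g h \<longleftrightarrow> (\<forall>i<n. fst g i = fst h i \<and> snd g i = snd h i)"

lemma signed_map_apply_compose:
  assumes "\<forall>i<8. fst g i < 8"
  shows "signed_map_apply g (signed_map_apply h x) = signed_map_apply (compose_map g h) x"
  using assms by (simp add: signed_map_apply_def compose_map_def)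

lemma signed_map_apply_scale_map:
  "signed_map_apply (scale_map e g) x = map (\<lambda>a. e * a) (signed_map_apply g x)"
  by (simp add: signed_map_apply_def scale_map_def)

lemma signed_map_apply_agree:
  assumes "agree_on 8 g h"
  shows "signed_map_apply g x = signed_map_apply h x"
  using assms by (auto simp: signed_map_apply_def agree_on_def)

lemma signed_map_apply_id: "length x = 8 \<Longrightarrow> signed_map_apply (id, \<lambda>_. 1) x = x"
  using map_nth[of x] by (simp add: signed_map_apply_def)

lemma kron3_map_agree:
  assumes "agree_on 2 a a'" "agree_on 2 b b'" "agree_on 2 c c'"
  shows "agree_on 8 (kron3_map a b c) (kron3_map a' b' c')"
  using assms by (simp add: agree_on_def kron3_map_def less_mult_imp_div_less)

lemma kron3_map_scale:
  "kron3_map (scale_map e1 a) (scale_map e2 b) (scale_map e3 c) = scale_map (e1 * e2 * e3) (kron3_map a b c)"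
  by (simp add: kron3_map_def scale_map_def fun_eq_iff mult_ac)

lemma kron3_map_id: "agree_on 8 (kron3_map (id, \<lambda>_. 1) (id, \<lambda>_. 1) (id, \<lambda>_. 1)) (id, \<lambda>_. 1)"
  using binary_expansion by (simp add: agree_on_def kron3_map_def)

lemma kron3_map_compose:
  assumes "\<forall>i<2. fst a i < 2" "\<forall>i<2. fst b i < 2" "\<forall>i<2. fst c i < 2"
  shows "agree_on 8 (compose_map (kron3_map a b c) (kron3_map a' b' c'))
    (kron3_map (compose_map a a') (compose_map b b') (compose_map c c'))"
  unfolding agree_on_def
proof (intro allI impI)
  fix i :: nat
  assume "i < 8"
  then have "fst a (i div 4) < 2" "fst b (i div 2 mod 2) < 2" "fst c (i mod 2) < 2"
    using assms by auto
  then show "fst (compose_map (kron3_map a b c) (kron3_map a' b' c')) i =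
      fst (kron3_map (compose_map a a') (compose_map b b') (compose_map c c')) i \<and>
    snd (compose_map (kron3_map a b c) (kron3_map a' b' c')) i =
      snd (kron3_map (compose_map a a') (compose_map b b') (compose_map c c')) i"
    by (simp add: compose_map_def kron3_map_def binary_digits mult_ac)
qed

lemma pauli_maps_compose:
  assumes "a \<in> set pauli_maps" "b \<in> set pauli_maps"
  obtains c e where "c \<in> set pauli_maps" "e \<in> {1, -1}" "agree_on 2 (compose_map a b) (scale_map e c)"
proof -
  have "\<exists>c\<in>set pauli_maps. \<exists>e\<in>{1, -1}. agree_on 2 (compose_map a b) (scale_map e c)"
    using assms unfolding pauli_maps_def
    by (simp add: agree_on_def compose_map_def scale_map_def less_2_cases_iff; elim disjE; simp)
  then show ?thesis
    using that by blast
qed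

lemma pauli_maps_square:
  assumes "a \<in> set pauli_maps"
  obtains e where "e \<in> {1, -1}" "agree_on 2 (compose_map a a) (scale_map e (id, \<lambda>_. 1))"
proof -
  have "\<exists>e\<in>{1, -1}. agree_on 2 (compose_map a a) (scale_map e (id, \<lambda>_. 1))"
    using assms unfolding pauli_maps_def
    by (simp add: agree_on_def compose_map_def scale_map_def less_2_cases_iff; elim disjE; simp)
  then show ?thesis
    using that by blast
qed

lemma kron3_map_compose_vtx:
  assumes "a \<in> set pauli_maps" "b \<in> set pauli_maps" "c \<in> set pauli_maps"
    and "agree_on 2 (compose_map a a') (scale_map e1 a'')"
    and "agree_on 2 (compose_map b b') (scale_map e2 b'')"
    and "agree_on 2 (compose_map c c') (scale_map e3 c'')"
    and "e1 \<in> {1, -1}" "e2 \<in> {1, -1}" "e3 \<in> {1, -1}"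
  shows "vtx (signed_map_apply (kron3_map a b c) (signed_map_apply (kron3_map a' b' c') x)) =
    vtx (signed_map_apply (kron3_map a'' b'' c'') x)"
proof -
  have "signed_map_apply (kron3_map a b c) (signed_map_apply (kron3_map a' b' c') x) =
      signed_map_apply (compose_map (kron3_map a b c) (kron3_map a' b' c')) x"
    using assms(1-3) by (simp add: signed_map_apply_compose kron3_map_range pauli_maps_range)
  also have "\<dots> = signed_map_apply (kron3_map (compose_map a a') (compose_map b b') (compose_map c c')) x"
    using assms(1-3) by (intro signed_map_apply_agree kron3_map_compose pauli_maps_range)
  also have "\<dots> = signed_map_apply (kron3_map (scale_map e1 a'') (scale_map e2 b'') (scale_map e3 c'')) x"
    using assms(4-6) by (intro signed_map_apply_agree kron3_map_agree)
  also have "\<dots> = map (\<lambda>y. e1 * e2 * e3 * y) (signed_map_apply (kron3_map a'' b'' c'') x)"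
    by (simp add: kron3_map_scale signed_map_apply_scale_map)
  finally show ?thesis
    using assms(7-9) vtx_scale[of "e1 * e2 * e3"] by auto
qed

lemma L_maps_compose:
  assumes "g \<in> set L_maps" "h \<in> set L_maps"
  shows "\<exists>k\<in>set L_maps. \<forall>x. vtx (signed_map_apply g (signed_map_apply h x)) = vtx (signed_map_apply k x)"
proof -
  obtain a b c where abc: "a \<in> set pauli_maps" "b \<in> set pauli_maps" "c \<in> set pauli_maps"
    and g: "g = kron3_map a b c"
    using assms(1) by (rule L_mapsE)
  obtain a' b' c' where abc': "a' \<in> set pauli_maps" "b' \<in> set pauli_maps" "c' \<in> set pauli_maps"
    and h: "h = kron3_map a' b' c'"
    using assms(2) by (rule L_mapsE)
  obtain a'' e1 where a'': "a'' \<in> set pauli_maps" "e1 \<in> {1, -1}"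
    "agree_on 2 (compose_map a a') (scale_map e1 a'')"
    using pauli_maps_compose[OF abc(1) abc'(1)] .
  obtain b'' e2 where b'': "b'' \<in> set pauli_maps" "e2 \<in> {1, -1}"
    "agree_on 2 (compose_map b b') (scale_map e2 b'')"
    using pauli_maps_compose[OF abc(2) abc'(2)] .
  obtain c'' e3 where c'': "c'' \<in> set pauli_maps" "e3 \<in> {1, -1}"
    "agree_on 2 (compose_map c c') (scale_map e3 c'')"
    using pauli_maps_compose[OF abc(3) abc'(3)] .
  have "kron3_map a'' b'' c'' \<in> set L_maps"
    using a'' b'' c'' by (auto simp: L_maps_def)
  moreover have "vtx (signed_map_apply g (signed_map_apply h x)) =
      vtx (signed_map_apply (kron3_map a'' b'' c'') x)" for x
    unfolding g h using kron3_map_compose_vtx[OF abc a''(3) b''(3) c''(3) a''(2) b''(2) c''(2)] .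
  ultimately show ?thesis
    by blast
qed

lemma L_maps_involution:
  assumes "g \<in> set L_maps" "length x = 8"
  shows "vtx (signed_map_apply g (signed_map_apply g x)) = vtx x"
proof -
  obtain a b c where abc: "a \<in> set pauli_maps" "b \<in> set pauli_maps" "c \<in> set pauli_maps"
    and g: "g = kron3_map a b c"
    using assms(1) by (rule L_mapsE)
  obtain e1 where a: "e1 \<in> {1, -1}" "agree_on 2 (compose_map a a) (scale_map e1 (id, \<lambda>_. 1))"
    using pauli_maps_square[OF abc(1)] .
  obtain e2 where b: "e2 \<in> {1, -1}" "agree_on 2 (compose_map b b) (scale_map e2 (id, \<lambda>_. 1))"
    using pauli_maps_square[OF abc(2)] .
  obtain e3 where c: "e3 \<in> {1, -1}" "agree_on 2 (compose_map c c) (scale_map e3 (id, \<lambda>_. 1))"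
    using pauli_maps_square[OF abc(3)] .
  have "vtx (signed_map_apply g (signed_map_apply g x)) =
      vtx (signed_map_apply (kron3_map (id, \<lambda>_. 1) (id, \<lambda>_. 1) (id, \<lambda>_. 1)) x)"
    unfolding g using kron3_map_compose_vtx[OF abc a(2) b(2) c(2) a(1) b(1) c(1)] .
  also have "\<dots> = vtx x"
    using assms(2) by (simp add: signed_map_apply_agree[OF kron3_map_id] signed_map_apply_id)
  finally show ?thesis .
qed

lemma L_orbit_memE:
  assumes "length x = 8" "vtx y \<in> L_orbit (vtx x)"
  obtains g where "g \<in> set L_maps" "vtx y = vtx (signed_map_apply g x)" "length y = 8"
proof -
  obtain g where "g \<in> set L_maps" and y: "vtx y = vtx (signed_map_apply g x)"
    using assms by (auto simp: L_orbit_vtx)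
  moreover have "length (signed_map_apply g x) = 8"
    by (simp add: signed_map_apply_def)
  then have "length y = 8"
    using y by (auto simp: vtx_eq_iff)
  ultimately show ?thesis
    using that by blast
qed

lemma L_orbit_subset:
  assumes "length x = 8" "vtx y \<in> L_orbit (vtx x)"
  shows "L_orbit (vtx y) \<subseteq> L_orbit (vtx x)"
proof
  fix v
  assume v: "v \<in> L_orbit (vtx y)"
  obtain g where g: "g \<in> set L_maps" and y: "vtx y = vtx (signed_map_apply g x)" "length y = 8"
    using assms by (rule L_orbit_memE)
  obtain h where h: "h \<in> set L_maps" and v: "v = vtx (signed_map_apply h y)"
    using v L_orbit_vtx[OF y(2)] by auto
  obtain k where "k \<in> set L_maps"
    and "vtx (signed_map_apply h (signed_map_apply g x)) = vtx (signed_map_apply k x)"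
    using L_maps_compose[OF h g] by blast
  moreover have "vtx (signed_map_apply h y) = vtx (signed_map_apply h (signed_map_apply g x))"
    using signed_map_apply_vtx_cong L_maps_range[OF h] y(1) by (simp add: signed_map_apply_def)
  ultimately show "v \<in> L_orbit (vtx x)"
    using v assms(1) by (auto simp: L_orbit_vtx)
qed

lemma L_orbit_sym:
  assumes "length x = 8" "vtx y \<in> L_orbit (vtx x)"
  shows "vtx x \<in> L_orbit (vtx y)"
proof -
  obtain g where g: "g \<in> set L_maps" and y: "vtx y = vtx (signed_map_apply g x)" "length y = 8"
    using assms by (rule L_orbit_memE)
  have "vtx x = vtx (signed_map_apply g (signed_map_apply g x))"
    using L_maps_involution[OF g assms(1)] by simp
  also have "\<dots> = vtx (signed_map_apply g y)"
    using signed_map_apply_vtx_cong[of g "signed_map_apply g x" y] L_maps_range[OF g] y(1)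
    by (simp add: signed_map_apply_def)
  finally show ?thesis
    using g y(2) by (auto simp: L_orbit_vtx)
qed

lemma L_orbit_eq_of_mem:
  assumes "length x = 8" "vtx y \<in> L_orbit (vtx x)"
  shows "L_orbit (vtx y) = L_orbit (vtx x)"
proof
  show "L_orbit (vtx y) \<subseteq> L_orbit (vtx x)"
    using assms by (rule L_orbit_subset)
  obtain g where "length y = 8"
    using assms by (rule L_orbit_memE)
  then show "L_orbit (vtx x) \<subseteq> L_orbit (vtx y)"
    using L_orbit_subset L_orbit_sym assms by blast
qed

lemma L_orbits_disjoint:
  assumes "O1 \<in> L_orbits" "O2 \<in> L_orbits" "O1 \<noteq> O2"
  shows "O1 \<inter> O2 = {}"
proof (rule ccontr)
  obtain x1 x2 where x: "x1 \<in> E8_roots" "x2 \<in> E8_roots"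
    and O: "O1 = L_orbit (vtx x1)" "O2 = L_orbit (vtx x2)"
    using assms(1,2) by (auto simp: L_orbits_def E8_vertices_def)
  assume "O1 \<inter> O2 \<noteq> {}"
  then obtain g where "g \<in> set L_maps" "vtx (signed_map_apply g x1) \<in> O1 \<inter> O2"
    using L_orbit_vtx[of x1] x(1) O(1) by (auto simp: E8_roots_length)
  then have "L_orbit (vtx (signed_map_apply g x1)) = O1" "L_orbit (vtx (signed_map_apply g x1)) = O2"
    using L_orbit_eq_of_mem x O by (simp_all add: E8_roots_length)
  then show False
    using assms(3) by simp
qed

section \<open>Computing the orbits\<close>

definition sign_normal :: "int list \<Rightarrow> int list" where
  "sign_normal x =
     (case dropWhile ((=) 0) x of [] \<Rightarrow> x | a # _ \<Rightarrow> if a < 0 then map uminus x else x)"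

lemma sign_normal_cases: "sign_normal x = x \<or> sign_normal x = map uminus x"
  by (auto simp: sign_normal_def split: list.split)

lemma length_sign_normal [simp]: "length (sign_normal x) = length x"
  using sign_normal_cases[of x] by auto

lemma sign_normal_uminus: "sign_normal (map uminus x) = sign_normal x"
proof (cases "dropWhile ((=) 0) x")
  case Nil
  then have "map uminus x = x"
    by (simp add: map_idI)
  then show ?thesis
    by simp
next
  case (Cons a xs)
  moreover have "((=) 0 \<circ> uminus) = ((=) (0::int))"
    by auto
  moreover have "a \<noteq> 0"
    using Cons hd_dropWhile[of "(=) 0" x] by auto
  ultimately show ?thesis
    by (auto simp: sign_normal_def dropWhile_map comp_def)
qed

lemma sign_normal_idem: "sign_normal (sign_normal x) = sign_normal x"
  using sign_normal_cases[of x] sign_normal_uminus[of x] by auto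

lemma vtx_sign_normal: "vtx (sign_normal x) = vtx x"
  using sign_normal_cases[of x] by (auto simp: vtx_eq_iff)

lemma vtx_eq_iff_sign_normal: "vtx x = vtx y \<longleftrightarrow> sign_normal x = sign_normal y"
  by (metis vtx_eq_iff vtx_sign_normal sign_normal_uminus)

lemma vtx_inj_on_sign_normal: "inj_on vtx {x. sign_normal x = x}"
  by (auto simp: inj_on_def vtx_eq_iff_sign_normal)

definition signed_map_table :: "signed_map \<Rightarrow> (nat \<times> int) list" where
  "signed_map_table g = map (\<lambda>i. (fst g i, snd g i)) [0..<8]"

definition table_apply :: "(nat \<times> int) list \<Rightarrow> int list \<Rightarrow> int list" where
  "table_apply t x = map (\<lambda>(k, s). s * x ! k) t"

lemma table_apply_signed_map_table: "table_apply (signed_map_table g) x = signed_map_apply g x"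
  by (simp add: table_apply_def signed_map_table_def signed_map_apply_def)

definition L_tables :: "(nat \<times> int) list list" where
  "L_tables = map signed_map_table L_maps"

(* The maps enter as tables passed as an argument, so that code_simp evaluates them only once. *)
definition orbit_list :: "(nat \<times> int) list list \<Rightarrow> int list \<Rightarrow> int list list" where
  "orbit_list T x = remdups (map (\<lambda>t. sign_normal (table_apply t x)) T)"

lemma L_orbit_orbit_list:
  assumes "length x = 8"
  shows "L_orbit (vtx x) = vtx ` set (orbit_list L_tables x)"
  by (auto simp: L_orbit_vtx[OF assms] orbit_list_def L_tables_def image_image
      table_apply_signed_map_table vtx_sign_normal)

lemma sign_normal_mem_orbit_list:
  assumes "length x = 8"
  shows "sign_normal x \<in> set (orbit_list L_tables x)"
proof -
  let ?I = "(id, \<lambda>_. 1) :: signed_map"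
  have "?I \<in> set pauli_maps"
    by (simp add: pauli_maps_def)
  then have "signed_map_table (kron3_map ?I ?I ?I) \<in> set L_tables"
    by (auto simp: L_tables_def L_maps_def)
  moreover have "table_apply (signed_map_table (kron3_map ?I ?I ?I)) x = x"
    using assms by (simp add: table_apply_signed_map_table signed_map_apply_agree[OF kron3_map_id]
        signed_map_apply_id)
  ultimately show ?thesis
    unfolding orbit_list_def by force
qed

lemma sign_normal_orbit_list: "y \<in> set (orbit_list T x) \<Longrightarrow> sign_normal y = y"
  by (auto simp: orbit_list_def sign_normal_idem)

function orbit_partition :: "(nat \<times> int) list list \<Rightarrow> int list list \<Rightarrow> int list list list" where
  "orbit_partition T [] = []"
| "orbit_partition T (x # xs) =
     (let C = orbit_list T x in C # orbit_partition T (filter (\<lambda>y. y \<notin> set C) xs))"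
  by pat_completeness auto
termination
  by (relation "measure (length \<circ> snd)") (auto simp: le_imp_less_Suc)

lemma orbit_partition_mem: "C \<in> set (orbit_partition T xs) \<Longrightarrow> \<exists>x\<in>set xs. C = orbit_list T x"
  by (induction T xs rule: orbit_partition.induct) (auto simp: Let_def)

lemma orbit_partition_covers:
  "\<forall>x\<in>set xs. x \<in> set (orbit_list T x) \<Longrightarrow> set xs \<subseteq> set (concat (orbit_partition T xs))"
  by (induction T xs rule: orbit_partition.induct) (auto simp: Let_def)

lemma orbit_partition_distinct:
  "\<forall>x\<in>set xs. x \<in> set (orbit_list T x) \<Longrightarrow> distinct (map set (orbit_partition T xs))"
proof (induction T xs rule: orbit_partition.induct)
  case (2 T x xs)
  let ?C = "orbit_list T x"
  have "set D \<noteq> set ?C" if "D \<in> set (orbit_partition T (filter (\<lambda>y. y \<notin> set ?C) xs))" for D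
    using orbit_partition_mem[OF that] "2.prems" by auto
  with 2 show ?case
    by (auto simp: Let_def)
qed simp

definition e8_root_list :: "int list list" where
  "e8_root_list =
     [map (\<lambda>k. if k = i then s else if k = j then t else 0) [0..<8].
        j \<leftarrow> [0..<8], i \<leftarrow> [0..<j], s \<leftarrow> [1, -1], t \<leftarrow> [1, -1]]
     @ filter (\<lambda>x. prod_list x = 1) (List.n_lists 8 [1, -1])"

lemma E8_roots_eq: "E8_roots = set e8_root_list"
proof -
  have "{map (\<lambda>k. if k = i then s else if k = j then t else 0) [0..<8] | i j s t.
      i < j \<and> j < 8 \<and> s \<in> {1, -1} \<and> t \<in> {1, -1}} =
    set [map (\<lambda>k. if k = i then s else if k = j then t else 0) [0..<8].
      j \<leftarrow> [0..<8], i \<leftarrow> [0..<j], s \<leftarrow> [1, -1], t \<leftarrow> [1, -1]]"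
    by (auto simp: atLeast0LessThan)
  moreover have "{x. length x = 8 \<and> set x \<subseteq> {1, -1} \<and> prod_list x = (1::int)} =
      set (filter (\<lambda>x. prod_list x = 1) (List.n_lists 8 [1, -1]))"
    by (auto simp: set_n_lists)
  ultimately show ?thesis
    unfolding E8_roots_def e8_root_list_def set_append by (rule arg_cong2[where f = "(\<union>)"])
qed

(* Recognises roots by their shape: searching e8_root_list instead is far slower under code_simp. *)
definition e8_root_test :: "int list \<Rightarrow> bool" where
  "e8_root_test y \<longleftrightarrow> length y = 8 \<and>
     (set y \<subseteq> {1, -1} \<and> prod_list y = 1 \<or>
      set y \<subseteq> {1, 0, -1} \<and> length (filter (\<lambda>a. a \<noteq> 0) y) = 2)"

lemma two_nonzero_entries:
  fixes y :: "int list"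
  assumes "length y = 8" "set y \<subseteq> {1, 0, -1}" "length (filter (\<lambda>a. a \<noteq> 0) y) = 2"
  obtains i j s t where "i < j" "j < 8" "s \<in> {1, -1}" "t \<in> {1, -1}"
    "y = map (\<lambda>k. if k = i then s else if k = j then t else 0) [0..<8]"
proof -
  let ?N = "{k. k < 8 \<and> y ! k \<noteq> 0}"
  have "card ?N = 2"
    using assms(1,3) by (simp add: length_filter_conv_card)
  then obtain i j where N: "?N = {i, j}" and "i < j"
    by (auto simp: card_2_iff) (metis insert_commute linorder_neqE_nat)
  then have ij: "i < 8" "j < 8" "y ! i \<noteq> 0" "y ! j \<noteq> 0"
    by blast+
  then have "y ! i \<in> set y" "y ! j \<in> set y"
    using assms(1) by simp_all
  then have "y ! i \<in> {1, -1}" "y ! j \<in> {1, -1}"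
    using assms(2) ij(3,4) by auto
  moreover have "y = map (\<lambda>k. if k = i then y ! i else if k = j then y ! j else 0) [0..<8]"
  proof (rule nth_equalityI)
    fix k
    assume "k < length y"
    then show "y ! k = map (\<lambda>k. if k = i then y ! i else if k = j then y ! j else 0) [0..<8] ! k"
      using N assms(1) by auto
  qed (simp add: assms(1))
  ultimately show ?thesis
    using that \<open>i < j\<close> ij(2) by blast
qed

lemma e8_root_test_sound:
  assumes "e8_root_test y"
  shows "y \<in> E8_roots"
proof -
  have len: "length y = 8"
    using assms by (simp add: e8_root_test_def)
  consider "set y \<subseteq> {1, -1}" "prod_list y = 1"
    | "set y \<subseteq> {1, 0, -1}" "length (filter (\<lambda>a. a \<noteq> 0) y) = 2"
    using assms unfolding e8_root_test_def by blast
  then show ?thesis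
  proof cases
    case 1
    then show ?thesis
      using len by (simp add: E8_roots_def)
  next
    case 2
    obtain i j s t where "i < j" "j < 8" "s \<in> {1, -1}" "t \<in> {1, -1}"
      and "y = map (\<lambda>k. if k = i then s else if k = j then t else 0) [0..<8]"
      by (rule two_nonzero_entries[OF len 2])
    then show ?thesis
      unfolding E8_roots_def by blast
  qed
qed

definition e8_orbit_lists :: "int list list list" where
  "e8_orbit_lists = orbit_partition L_tables (map sign_normal e8_root_list)"

(* The let makes code_simp compute the orbit lists only once. *)
lemma e8_orbit_lists_facts:
  "let OL = e8_orbit_lists in length OL = 15 \<and>
     (\<forall>C\<in>set OL. length C = 8 \<and> (\<forall>x\<in>set C. e8_root_test x) \<and>
        (\<forall>x\<in>set C. \<forall>y\<in>set C. x \<noteq> y \<longrightarrow> inner8 x y = 0))"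
  unfolding e8_orbit_lists_def by code_simp

section \<open>The orbit decomposition\<close>

lemma e8_orbit_lists_elements:
  assumes "C \<in> set e8_orbit_lists"
  obtains x where "x \<in> E8_roots" "C = orbit_list L_tables (sign_normal x)"
  using orbit_partition_mem[OF assms[unfolded e8_orbit_lists_def]] E8_roots_eq that by auto

lemma normal_roots_mem_own_orbit_list:
  "\<forall>y\<in>set (map sign_normal e8_root_list). y \<in> set (orbit_list L_tables y)"
proof
  fix y
  assume "y \<in> set (map sign_normal e8_root_list)"
  then obtain r where "r \<in> E8_roots" "y = sign_normal r"
    by (auto simp: E8_roots_eq)
  then show "y \<in> set (orbit_list L_tables y)"
    using sign_normal_mem_orbit_list[of y] by (simp add: E8_roots_length sign_normal_idem)
qed

lemma e8_orbit_list_normal: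
  assumes "C \<in> set e8_orbit_lists"
  shows "set C \<subseteq> {x. sign_normal x = x}"
proof -
  obtain x where "C = orbit_list L_tables (sign_normal x)"
    using assms by (rule e8_orbit_lists_elements)
  then show ?thesis
    using sign_normal_orbit_list by blast
qed

lemma e8_orbit_list_L_orbit:
  assumes "C \<in> set e8_orbit_lists"
  shows "vtx ` set C \<in> L_orbits"
proof -
  obtain x where "x \<in> E8_roots" "C = orbit_list L_tables (sign_normal x)"
    using assms by (rule e8_orbit_lists_elements)
  then show ?thesis
    using L_orbit_orbit_list[of "sign_normal x"]
    by (auto simp: L_orbits_def E8_vertices_def E8_roots_length vtx_sign_normal)
qed

lemma L_orbits_eq: "L_orbits = (\<lambda>C. vtx ` set C) ` set e8_orbit_lists"
proof
  show "(\<lambda>C. vtx ` set C) ` set e8_orbit_lists \<subseteq> L_orbits"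
    using e8_orbit_list_L_orbit by blast
next
  show "L_orbits \<subseteq> (\<lambda>C. vtx ` set C) ` set e8_orbit_lists"
  proof
    fix O'
    assume "O' \<in> L_orbits"
    then obtain x where x: "x \<in> E8_roots" and O': "O' = L_orbit (vtx x)"
      by (auto simp: L_orbits_def E8_vertices_def)
    have "sign_normal x \<in> set (concat e8_orbit_lists)"
      using orbit_partition_covers[OF normal_roots_mem_own_orbit_list] x
      by (auto simp: e8_orbit_lists_def E8_roots_eq)
    then obtain C where C: "C \<in> set e8_orbit_lists" "sign_normal x \<in> set C"
      by auto
    obtain r where r: "r \<in> E8_roots" "C = orbit_list L_tables (sign_normal r)"
      using C(1) by (rule e8_orbit_lists_elements)
    then have C_orbit: "vtx ` set C = L_orbit (vtx (sign_normal r))"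
      by (simp add: L_orbit_orbit_list E8_roots_length)
    then have "vtx x \<in> L_orbit (vtx (sign_normal r))"
      using C(2) vtx_sign_normal by (metis image_eqI)
    then have "O' = vtx ` set C"
      using O' C_orbit L_orbit_eq_of_mem r(1) by (simp add: E8_roots_length)
    then show "O' \<in> (\<lambda>C. vtx ` set C) ` set e8_orbit_lists"
      using C(1) by blast
  qed
qed

lemma e8_orbit_list_card:
  assumes "C \<in> set e8_orbit_lists"
  shows "card (vtx ` set C) = 8"
proof -
  obtain x where "C = orbit_list L_tables (sign_normal x)"
    using assms by (rule e8_orbit_lists_elements)
  then have "distinct C"
    by (simp add: orbit_list_def)
  moreover have "inj_on vtx (set C)"
    using inj_on_subset[OF vtx_inj_on_sign_normal e8_orbit_list_normal[OF assms]] .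
  moreover have "length C = 8"
    using e8_orbit_lists_facts assms by (simp add: Let_def)
  ultimately show ?thesis
    by (simp add: card_image distinct_card)
qed

lemma e8_orbit_list_clique:
  assumes "C \<in> set e8_orbit_lists"
  shows "is_clique (vtx ` set C)"
proof -
  have "\<forall>x\<in>set C. e8_root_test x" and orth: "\<forall>x\<in>set C. \<forall>y\<in>set C. x \<noteq> y \<longrightarrow> inner8 x y = 0"
    using e8_orbit_lists_facts assms by (simp_all add: Let_def)
  then have roots: "set C \<subseteq> E8_roots"
    using e8_root_test_sound by blast
  have "E8_adj (vtx x) (vtx y)" if "x \<in> set C" "y \<in> set C" "vtx x \<noteq> vtx y" for x y
    unfolding E8_adj_def using that roots orth by (intro exI[of _ x] exI[of _ y]) auto
  then show ?thesis
    using roots by (auto simp: is_clique_def E8_vertices_def)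
qed

lemma card_L_orbits: "card L_orbits = 15"
proof -
  let ?OL = e8_orbit_lists
  have "distinct (map set ?OL)"
    unfolding e8_orbit_lists_def by (rule orbit_partition_distinct[OF normal_roots_mem_own_orbit_list])
  moreover have "inj_on (\<lambda>C. vtx ` set C) (set ?OL)"
  proof (rule inj_onI)
    fix C D
    assume C: "C \<in> set ?OL" and D: "D \<in> set ?OL" and CD: "vtx ` set C = vtx ` set D"
    have "set C = set D"
      using CD inj_on_image_eq_iff[OF vtx_inj_on_sign_normal
          e8_orbit_list_normal[OF C] e8_orbit_list_normal[OF D]] by simp
    then show "C = D"
      using \<open>distinct (map set ?OL)\<close> C D by (auto simp: distinct_map inj_on_def)
  qed
  ultimately have "card L_orbits = length ?OL"
    by (simp add: L_orbits_eq card_image distinct_card distinct_map)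
  also have "\<dots> = 15"
    using e8_orbit_lists_facts by (simp add: Let_def)
  finally show ?thesis .
qed

lemma L_orbit_card_clique: "C \<in> L_orbits \<Longrightarrow> card C = 8 \<and> is_clique C"
  by (auto simp: L_orbits_eq e8_orbit_list_card e8_orbit_list_clique)

lemma Union_L_orbits: "\<Union> L_orbits = E8_vertices"
proof
  show "\<Union> L_orbits \<subseteq> E8_vertices"
    using L_orbit_card_clique by (auto simp: is_clique_def)
  show "E8_vertices \<subseteq> \<Union> L_orbits"
  proof
    fix v
    assume "v \<in> E8_vertices"
    then obtain x where x: "x \<in> E8_roots" "v = vtx x"
      by (auto simp: E8_vertices_def)
    then have "v \<in> L_orbit v"
      using sign_normal_mem_orbit_list[of x] L_orbit_orbit_list[of x] vtx_sign_normal[of x]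
      by (auto simp: E8_roots_length)
    then show "v \<in> \<Union> L_orbits"
      using x by (auto simp: L_orbits_def E8_vertices_def)
  qed
qed

theorem lemma3p4:
  shows "card L_orbits = 15
    \<and> (\<forall>C\<in>L_orbits. card C = 8 \<and> is_clique C)
    \<and> \<Union> L_orbits = E8_vertices
    \<and> (\<forall>O1\<in>L_orbits. \<forall>O2\<in>L_orbits. O1 \<noteq> O2 \<longrightarrow> O1 \<inter> O2 = {})"
  using card_L_orbits L_orbit_card_clique Union_L_orbits L_orbits_disjoint by blast

end
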